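(* Let $g:\mathbb{R}\to\mathbb{R}$ with $g(0)=0$ satisfy: (C1) $|g(x)|\le c+d|x|$ for all $x$, for some constants $c,d\ge0$; (C2) $g(x)<0$ for $x<0$ and $g(x)>0$ for $x>0$; (C3) $\inf_{\delta_1\le|x|\le\delta_2}|g(x)|>0$ for every $0<\delta_1<\delta_2<\infty$. Let $\{\mathcal{F}_n\}_{n\ge0}$ be a filtration, $X_0$ an integrable $\mathcal{F}_0$-measurable random variable, and $X_n=X_{n-1}-\alpha_nU_n$, $n\ge1$, where each $U_n$ is integrable and $\mathcal{F}_n$-measurable, and the constants $\alpha_n$ satisfy $\alpha_n\ge0$, $\alpha_n\to0$, $\sum_n\alpha_n=\infty$. Assume $E[U_n\mid\mathcal{F}_{n-1}]=g(X_{n-1})$ a.e. for $n\ge1$, and that the series $\sum_{i\ge1}\alpha_i\{U_i-E[U_i\mid\mathcal{F}_{i-1}]\}$ converges a.e. Then $X_n\to0$ a.e. *)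

theory Defs
  imports "HOL-Probability.Probability"
begin

end

theory Submission
  imports Defs
begin

text \<open>Subtracting the tail sums of the convergent noise series turns the recursion, path by path,
into the deterministic iteration \<open>y\<^sub>n\<^sub>+\<^sub>1 = y\<^sub>n - \<alpha>\<^sub>n g(y\<^sub>n + s\<^sub>n)\<close> with perturbations \<open>s\<^sub>n \<rightarrow> 0\<close>.
Once \<open>\<alpha>\<^sub>n\<close> and \<open>s\<^sub>n\<close> are small, the sign and linear growth conditions make \<open>|y\<^sub>n|\<close> unable to
exceed \<open>max |y\<^sub>n| 2\<eta>\<close> after a step, and above \<open>2\<eta>\<close> every step decreases \<open>|y\<^sub>n|\<close> by \<open>\<alpha>\<^sub>n\<close> times a
positive lower bound of \<open>|g|\<close> on an annulus. Since \<open>\<Sum> \<alpha>\<^sub>n = \<infinity>\<close>, \<open>|y\<^sub>n|\<close> must eventually drop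
below \<open>2\<eta>\<close>, and then it stays there.\<close>

lemma le_max_from_step:
  fixes a :: "nat \<Rightarrow> 'b::linorder"
  assumes step_le: "\<And>n. N \<le> n \<Longrightarrow> a (Suc n) \<le> max (a n) r" and "N \<le> m" "m \<le> n"
  shows "a n \<le> max (a m) r"
  using \<open>m \<le> n\<close>
proof (induction n rule: dec_induct)
  case (step n)
  then show ?case using step_le[of n] \<open>N \<le> m\<close> by (auto simp: max_def split: if_splits)
qed simp

lemma summable_if_nonneg_descent:
  fixes a b :: "nat \<Rightarrow> real"
  assumes descent: "\<And>n. N \<le> n \<Longrightarrow> a (Suc n) + \<mu> * b n \<le> a n"
    and a_nonneg: "\<And>n. 0 \<le> a n" and "0 < \<mu>" and b_nonneg: "\<And>n. 0 \<le> b n"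
  shows "summable b"
proof -
  have partial: "a (N + k) + \<mu> * (\<Sum>i<k. b (i + N)) \<le> a N" for k
  proof (induction k)
    case (Suc k)
    then show ?case using descent[of "N + k"] by (simp add: algebra_simps)
  qed simp
  have "(\<Sum>i<k. b (i + N)) \<le> a N / \<mu>" for k
    using partial[of k] a_nonneg[of "N + k"] \<open>0 < \<mu>\<close> by (simp add: field_simps)
  then have "summable (\<lambda>i. b (i + N))"
    using b_nonneg by (intro summableI_nonneg_bounded) auto
  then show ?thesis by (rule summable_iff_shift[THEN iffD1])
qed

lemma descent_step_pos:
  fixes g :: "real \<Rightarrow> real"
  assumes growth: "\<And>z. \<bar>g z\<bar> \<le> c + d * \<bar>z\<bar>" and "0 \<le> d"
    and pos: "\<And>z. 0 < z \<Longrightarrow> 0 < g z"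
    and "\<bar>s\<bar> < \<eta>" "0 \<le> b" "b * d \<le> 1" "b * (c + 2 * d * \<eta>) \<le> \<eta>" "\<eta> < x"
  shows "0 < g (x + s)" and "- \<eta> \<le> x - b * g (x + s)" and "x - b * g (x + s) \<le> x"
proof -
  have "0 < x + s" using assms by auto
  then have g_pos: "0 < g (x + s)" by (rule pos)
  have "g (x + s) \<le> c + d * (x + s)"
    using growth[of "x + s"] \<open>0 < x + s\<close> by simp
  also have "\<dots> \<le> c + d * x + d * \<eta>"
    using mult_left_mono[of s \<eta> d] assms by (simp add: algebra_simps)
  finally have "g (x + s) \<le> c + d * x + d * \<eta>" .
  then have "b * g (x + s) \<le> b * d * x + b * (c + d * \<eta>)"
    using mult_left_mono[OF _ \<open>0 \<le> b\<close>] by (fastforce simp: algebra_simps)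
  moreover have "b * d * x \<le> x" using assms by (simp add: mult_left_le_one_le)
  moreover have "b * (c + d * \<eta>) \<le> \<eta>"
  proof -
    have "0 < \<eta>" using \<open>\<bar>s\<bar> < \<eta>\<close> by linarith
    then have "0 \<le> b * d * \<eta>" using \<open>0 \<le> b\<close> \<open>0 \<le> d\<close> by simp
    then show ?thesis using \<open>b * (c + 2 * d * \<eta>) \<le> \<eta>\<close> by (simp add: algebra_simps)
  qed
  ultimately show "- \<eta> \<le> x - b * g (x + s)" by linarith
  show "0 < g (x + s)" "x - b * g (x + s) \<le> x" using g_pos \<open>0 \<le> b\<close> by simp_all
qed

locale centered_drift =
  fixes g :: "real \<Rightarrow> real" and c d :: real
  assumes d_nonneg: "0 \<le> d"
    and growth: "\<And>x. \<bar>g x\<bar> \<le> c + d * \<bar>x\<bar>"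
    and sign: "\<forall>x. (x < 0 \<longrightarrow> g x < 0) \<and> (x > 0 \<longrightarrow> g x > 0)"
    and annulus: "\<forall>\<delta>1 \<delta>2. 0 < \<delta>1 \<longrightarrow> \<delta>1 < \<delta>2 \<longrightarrow>
               (INF x\<in>{x. \<delta>1 \<le> \<bar>x\<bar> \<and> \<bar>x\<bar> \<le> \<delta>2}. \<bar>g x\<bar>) > 0"
begin

lemma annulus_lower_bound:
  assumes "0 < \<delta>1" "\<delta>1 < \<delta>2"
  obtains \<mu> where "0 < \<mu>" "\<And>x. \<delta>1 \<le> \<bar>x\<bar> \<Longrightarrow> \<bar>x\<bar> \<le> \<delta>2 \<Longrightarrow> \<mu> \<le> \<bar>g x\<bar>"
proof
  let ?A = "{x. \<delta>1 \<le> \<bar>x\<bar> \<and> \<bar>x\<bar> \<le> \<delta>2}"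
  show "0 < (INF x\<in>?A. \<bar>g x\<bar>)" using annulus assms by blast
  show "(INF x\<in>?A. \<bar>g x\<bar>) \<le> \<bar>g x\<bar>" if "\<delta>1 \<le> \<bar>x\<bar>" "\<bar>x\<bar> \<le> \<delta>2" for x
    using that by (intro cINF_lower) (auto intro!: bdd_belowI[where m = 0])
qed

lemma descent_step:
  assumes "\<bar>s\<bar> < \<eta>" "0 \<le> b" "b * d \<le> 1" "b * (c + 2 * d * \<eta>) \<le> \<eta>"
  shows "\<bar>x - b * g (x + s)\<bar> \<le> max \<bar>x\<bar> (2 * \<eta>)"
    and "2 * \<eta> < \<bar>x - b * g (x + s)\<bar> \<Longrightarrow> \<bar>x - b * g (x + s)\<bar> = \<bar>x\<bar> - b * \<bar>g (x + s)\<bar>"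
proof -
  let ?x' = "x - b * g (x + s)"
  have large: "\<bar>?x'\<bar> \<le> \<eta> \<or> \<bar>?x'\<bar> = \<bar>x\<bar> - b * \<bar>g (x + s)\<bar>" if "\<eta> < \<bar>x\<bar>"
  proof (cases "0 < x")
    case True
    have "0 < g (x + s)" "- \<eta> \<le> ?x'" "?x' \<le> x"
      using descent_step_pos[OF growth d_nonneg _ assms, of x] sign that True by auto
    then show ?thesis using True by (cases "0 \<le> ?x'") auto
  next
    case False
    \<comment> \<open>reflect: \<open>z \<mapsto> -g (-z)\<close> satisfies the same growth and sign conditions\<close>
    have growth': "\<bar>- g (- z)\<bar> \<le> c + d * \<bar>z\<bar>" for z using growth[of "- z"] by simp
    have pos': "0 < - g (- z)" if "0 < z" for z using sign that by simp
    have "\<bar>- s\<bar> < \<eta>" "\<eta> < - x" using assms(1) that False by auto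
    from descent_step_pos[OF growth' d_nonneg pos' this(1) assms(2-4) this(2)]
    have "g (x + s) < 0" "- \<eta> \<le> - ?x'" "- ?x' \<le> - x" by (simp_all add: algebra_simps)
    then show ?thesis using False by (cases "?x' \<le> 0") auto
  qed
  have small: "\<bar>?x'\<bar> \<le> 2 * \<eta>" if "\<bar>x\<bar> \<le> \<eta>"
  proof -
    have "\<bar>g (x + s)\<bar> \<le> c + d * \<bar>x + s\<bar>" by (rule growth)
    also have "\<dots> \<le> c + d * (2 * \<eta>)"
      using that assms(1) d_nonneg abs_triangle_ineq[of x s] by (intro add_left_mono mult_left_mono) auto
    finally have "b * \<bar>g (x + s)\<bar> \<le> b * (c + 2 * d * \<eta>)"
      using \<open>0 \<le> b\<close> by (simp add: mult_left_mono)
    then have "\<bar>b * g (x + s)\<bar> \<le> \<eta>" using assms(2,4) by (simp add: abs_mult)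
    then show ?thesis using that abs_triangle_ineq4[of x "b * g (x + s)"] by linarith
  qed
  show "\<bar>?x'\<bar> \<le> max \<bar>x\<bar> (2 * \<eta>)"
  proof (cases "\<eta> < \<bar>x\<bar>")
    case True
    have "0 \<le> b * \<bar>g (x + s)\<bar>" using \<open>0 \<le> b\<close> by simp
    then show ?thesis using large[OF True] True by linarith
  qed (use small in auto)
  show "\<bar>?x'\<bar> = \<bar>x\<bar> - b * \<bar>g (x + s)\<bar>" if "2 * \<eta> < \<bar>?x'\<bar>"
  proof -
    have "\<eta> < \<bar>x\<bar>" using small that by force
    then show ?thesis using large that by force
  qed
qed

lemma perturbed_descent_eventually_small:
  fixes y s b :: "nat \<Rightarrow> real"
  assumes rec: "\<And>n. y (Suc n) = y n - b n * g (y n + s n)"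
    and "s \<longlonglongrightarrow> 0" "b \<longlonglongrightarrow> 0" and b_nonneg: "\<And>n. 0 \<le> b n" and b_div: "\<not> summable b"
    and "0 < \<eta>"
  shows "\<forall>\<^sub>F n in sequentially. \<bar>y n\<bar> \<le> 2 * \<eta>"
proof -
  have "\<forall>\<^sub>F n in sequentially. \<bar>s n\<bar> < \<eta>"
    using \<open>s \<longlonglongrightarrow> 0\<close> \<open>0 < \<eta>\<close> by (auto simp: tendsto_iff dist_real_def)
  moreover have "\<forall>\<^sub>F n in sequentially. b n * d < 1" "\<forall>\<^sub>F n in sequentially. b n * (c + 2 * d * \<eta>) < \<eta>"
    using \<open>b \<longlonglongrightarrow> 0\<close> \<open>0 < \<eta>\<close>
    by (auto intro!: order_tendstoD(2) tendsto_mult_left_zero)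
  ultimately obtain N where N: "\<And>n. N \<le> n \<Longrightarrow>
      \<bar>s n\<bar> < \<eta> \<and> b n * d \<le> 1 \<and> b n * (c + 2 * d * \<eta>) \<le> \<eta>"
    unfolding eventually_sequentially by (metis (no_types) le_max_iff_disj less_le_not_le nle_le)
  have step_max: "\<bar>y (Suc n)\<bar> \<le> max \<bar>y n\<bar> (2 * \<eta>)" if "N \<le> n" for n
    using descent_step(1)[of "s n" \<eta> "b n" "y n"] N[OF that] b_nonneg[of n] by (simp add: rec)
  have step_descent: "\<bar>y (Suc n)\<bar> = \<bar>y n\<bar> - b n * \<bar>g (y n + s n)\<bar>"
    if "N \<le> n" "2 * \<eta> < \<bar>y (Suc n)\<bar>" for n
    using descent_step(2)[of "s n" \<eta> "b n" "y n"] N[OF that(1)] b_nonneg[of n] that(2) by (simp add: rec)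
  have "\<exists>m\<ge>N. \<bar>y m\<bar> \<le> 2 * \<eta>"
  proof (rule ccontr)
    assume "\<not> ?thesis"
    then have big: "2 * \<eta> < \<bar>y n\<bar>" if "N \<le> n" for n using that by force
    define B where "B = max \<bar>y N\<bar> (2 * \<eta>)"
    have "\<eta> < B + \<eta>" using \<open>0 < \<eta>\<close> by (simp add: B_def)
    then obtain \<mu> where "0 < \<mu>" and \<mu>: "\<And>x. \<eta> \<le> \<bar>x\<bar> \<Longrightarrow> \<bar>x\<bar> \<le> B + \<eta> \<Longrightarrow> \<mu> \<le> \<bar>g x\<bar>"
      using annulus_lower_bound \<open>0 < \<eta>\<close> by blast
    have "\<bar>y (Suc n)\<bar> + \<mu> * b n \<le> \<bar>y n\<bar>" if "N \<le> n" for n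
    proof -
      have "\<bar>y n\<bar> \<le> B"
        unfolding B_def by (rule le_max_from_step[where a = "\<lambda>n. \<bar>y n\<bar>", OF step_max order_refl that])
      then have "\<mu> \<le> \<bar>g (y n + s n)\<bar>" using \<mu> N[OF that] big[OF that] by (intro \<mu>) auto
      then show ?thesis
        using step_descent[OF that big[of "Suc n"]] that mult_left_mono[OF _ b_nonneg[of n]]
        by (fastforce simp: mult.commute)
    qed
    then have "summable b" by (rule summable_if_nonneg_descent[OF _ abs_ge_zero \<open>0 < \<mu>\<close> b_nonneg])
    then show False using b_div by contradiction
  qed
  then obtain m where "N \<le> m" "\<bar>y m\<bar> \<le> 2 * \<eta>" by blast
  then have "\<bar>y n\<bar> \<le> 2 * \<eta>" if "m \<le> n" for n
    using le_max_from_step[where a = "\<lambda>n. \<bar>y n\<bar>", OF step_max \<open>N \<le> m\<close> that] by simp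
  then show ?thesis unfolding eventually_sequentially by blast
qed

lemma perturbed_descent_tendsto_zero:
  fixes y s b :: "nat \<Rightarrow> real"
  assumes "\<And>n. y (Suc n) = y n - b n * g (y n + s n)"
    and "s \<longlonglongrightarrow> 0" "b \<longlonglongrightarrow> 0" "\<And>n. 0 \<le> b n" "\<not> summable b"
  shows "y \<longlonglongrightarrow> 0"
proof (rule tendstoI)
  fix r :: real assume "0 < r"
  then have "\<forall>\<^sub>F n in sequentially. \<bar>y n\<bar> \<le> 2 * (r / 4)"
    using assms by (intro perturbed_descent_eventually_small) auto
  then show "\<forall>\<^sub>F n in sequentially. dist (y n) 0 < r"
    by eventually_elim (use \<open>0 < r\<close> in auto)
qed

lemma robbins_monro_summable_noise:
  fixes x e b :: "nat \<Rightarrow> real"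
  assumes rec: "\<And>n. x (Suc n) = x n - b n * g (x n) - e n" and "summable e"
    and "b \<longlonglongrightarrow> 0" "\<And>n. 0 \<le> b n" "\<not> summable b"
  shows "x \<longlonglongrightarrow> 0"
proof -
  define R where "R n = (\<Sum>i. e (i + n))" for n
  have R_lim: "R \<longlonglongrightarrow> 0" unfolding R_def by (rule suminf_exist_split2[OF \<open>summable e\<close>])
  have R_split: "R n = e n + R (Suc n)" for n
    using suminf_split_head[of "\<lambda>i. e (i + n)"] \<open>summable e\<close> by (simp add: R_def)
  have "x (Suc n) - R (Suc n) = (x n - R n) - b n * g ((x n - R n) + R n)" for n
    using rec[of n] R_split[of n] by simp
  then have "(\<lambda>n. x n - R n) \<longlonglongrightarrow> 0"
    using R_lim assms(3-5) by (rule perturbed_descent_tendsto_zero)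
  then have "(\<lambda>n. (x n - R n) + R n) \<longlonglongrightarrow> 0 + 0" using R_lim by (rule tendsto_add)
  then show ?thesis by simp
qed

end

theorem mainTheorem5:
  fixes M :: "'a measure" and F :: "nat \<Rightarrow> 'a measure"
    and g :: "real \<Rightarrow> real" and X U :: "nat \<Rightarrow> 'a \<Rightarrow> real" and \<alpha> :: "nat \<Rightarrow> real"
  assumes "prob_space M"
    and g0: "g 0 = 0"
    and C1: "\<exists>c d. c \<ge> 0 \<and> d \<ge> 0 \<and> (\<forall>x. \<bar>g x\<bar> \<le> c + d * \<bar>x\<bar>)"
    and C2: "\<forall>x. (x < 0 \<longrightarrow> g x < 0) \<and> (x > 0 \<longrightarrow> g x > 0)"
    and C3: "\<forall>\<delta>1 \<delta>2. 0 < \<delta>1 \<longrightarrow> \<delta>1 < \<delta>2 \<longrightarrow>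
               (INF x\<in>{x. \<delta>1 \<le> \<bar>x\<bar> \<and> \<bar>x\<bar> \<le> \<delta>2}. \<bar>g x\<bar>) > 0"
    and filt: "filtration (space M) F"
    and sub: "\<forall>n. subalgebra M (F n)"
    and X0_meas: "X 0 \<in> borel_measurable (F 0)"
    and X0_int: "integrable M (X 0)"
    and X_rec: "\<forall>n \<omega>. X (Suc n) \<omega> = X n \<omega> - \<alpha> (Suc n) * U (Suc n) \<omega>"
    and U_meas: "\<forall>n. U (Suc n) \<in> borel_measurable (F (Suc n))"
    and U_int: "\<forall>n. integrable M (U (Suc n))"
    and \<alpha>_nonneg: "\<forall>n. \<alpha> (Suc n) \<ge> 0"
    and \<alpha>_lim: "(\<lambda>n. \<alpha> (Suc n)) \<longlonglongrightarrow> 0"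
    and \<alpha>_div: "\<not> summable (\<lambda>n. \<alpha> (Suc n))"
    and cond: "\<forall>n. AE \<omega> in M. real_cond_exp M (F n) (U (Suc n)) \<omega> = g (X n \<omega>)"
    and noise: "AE \<omega> in M. summable (\<lambda>i. \<alpha> (Suc i) *
                 (U (Suc i) \<omega> - real_cond_exp M (F i) (U (Suc i)) \<omega>))"
  shows "AE \<omega> in M. (\<lambda>n. X n \<omega>) \<longlonglongrightarrow> 0"
proof -
  obtain c d where "0 \<le> d" "\<And>x. \<bar>g x\<bar> \<le> c + d * \<bar>x\<bar>" using C1 by blast
  with C2 C3 interpret centered_drift g c d by unfold_locales
  have "AE \<omega> in M. \<forall>n. real_cond_exp M (F n) (U (Suc n)) \<omega> = g (X n \<omega>)"
    using cond by (simp add: AE_all_countable)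
  with noise show ?thesis
  proof eventually_elim
    case (elim \<omega>)
    have "X (Suc n) \<omega> = X n \<omega> - \<alpha> (Suc n) * g (X n \<omega>)
        - \<alpha> (Suc n) * (U (Suc n) \<omega> - real_cond_exp M (F n) (U (Suc n)) \<omega>)" for n
      using X_rec elim(2) by (simp add: algebra_simps)
    from robbins_monro_summable_noise[OF this elim(1) \<alpha>_lim] \<alpha>_nonneg \<alpha>_div
    show ?case by simp
  qed
qed

end
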